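(* For every Clifford circuit $\mathcal C$ and all fault operators $F,G$ of $\mathcal C$, $[\overrightarrow F,G]=[F,\overleftarrow G]$.
   Context: A Clifford circuit on $n$ qubits is a finite sequence of operations, each a unitary Clifford gate or a Pauli measurement, each with a level in $\{1,2,\dots\}$, operations of equal level having disjoint supports; the depth $\Delta$ is the maximal level. $\overline{\mathcal P}_N$ is the $N$-qubit Pauli group modulo phases; for Paulis $P,Q$, $[P,Q]\in\mathbb Z_2$ is $0$ if they commute and $1$ otherwise. For $1\le\ell\le\Delta$, $U_\ell$ is the product of all unitary gates of level $\ell$ (identity if none). A fault operator is $F\in\overline{\mathcal P}_{n(\Delta+1)}$ acting on qubits $(\ell+0.5,q)$, $0\le\ell\le\Delta$, $1\le q\le n$; $F_{\ell+0.5}\in\overline{\mathcal P}_n$ is its component on level $\ell+0.5$. Cumulant $\overrightarrow F$: start with $\overrightarrow F=F$; for $\ell=1,\dots,\Delta$ in increasing order replace $\overrightarrow F_{\ell+0.5}$ by $\overrightarrow F_{\ell+0.5}\cdot U_\ell\overrightarrow F_{\ell-0.5}U_\ell^{-1}$. Back-cumulant $\overleftarrow F$: start with $\overleftarrow F=F$; for $\ell=\Delta,\dots,1$ in decreasing order replace $\overleftarrow F_{\ell-0.5}$ by $\overleftarrow F_{\ell-0.5}\cdot U_\ell^{-1}\overleftarrow F_{\ell+0.5}U_\ell$. *)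

theory Defs
  imports Main
begin

text \<open>A Pauli operator modulo phases on qubits indexed by nat, in symplectic
(X-part, Z-part) representation: qubit q carries I=(False,False), X=(True,False),
Z=(False,True), Y=(True,True).\<close>
type_synonym pauli = "nat \<Rightarrow> bool \<times> bool"

definition paulis :: "nat \<Rightarrow> pauli set" where
  "paulis n = {P. \<forall>q\<ge>n. P q = (False, False)}"

definition pmult :: "pauli \<Rightarrow> pauli \<Rightarrow> pauli" where
  "pmult P Q = (\<lambda>q. (fst (P q) \<noteq> fst (Q q), snd (P q) \<noteq> snd (Q q)))"

definition anti1 :: "bool \<times> bool \<Rightarrow> bool \<times> bool \<Rightarrow> bool" where
  "anti1 a b = ((fst a \<and> snd b) \<noteq> (snd a \<and> fst b))"

text \<open>Commutator [P,Q] in Z_2 (True = 1 = anticommute) for n-qubit Paulis.\<close>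
definition pcomm :: "nat \<Rightarrow> pauli \<Rightarrow> pauli \<Rightarrow> bool" where
  "pcomm n P Q = odd (card {q. q < n \<and> anti1 (P q) (Q q)})"

text \<open>Conjugation P |-> U P U^-1 by an n-qubit Clifford unitary U, viewed modulo phases:
a bijection of the n-qubit Paulis that is multiplicative and preserves commutators.\<close>
definition clifford_action :: "nat \<Rightarrow> (pauli \<Rightarrow> pauli) \<Rightarrow> bool" where
  "clifford_action n f \<longleftrightarrow> bij_betw f (paulis n) (paulis n)
     \<and> (\<forall>P\<in>paulis n. \<forall>Q\<in>paulis n. f (pmult P Q) = pmult (f P) (f Q))
     \<and> (\<forall>P\<in>paulis n. \<forall>Q\<in>paulis n. pcomm n (f P) (f Q) = pcomm n P Q)"

definition inv_action :: "nat \<Rightarrow> (pauli \<Rightarrow> pauli) \<Rightarrow> pauli \<Rightarrow> pauli" where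
  "inv_action n f = inv_into (paulis n) f"

text \<open>Fault operators: F :: nat => pauli, F l is the component on level l+0.5
(0 <= l <= Delta).  A fault operator is valid if each component is an n-qubit Pauli.\<close>
definition fault_op :: "nat \<Rightarrow> nat \<Rightarrow> (nat \<Rightarrow> pauli) \<Rightarrow> bool" where
  "fault_op n \<Delta> F \<longleftrightarrow> (\<forall>l\<le>\<Delta>. F l \<in> paulis n)"

definition fcomm :: "nat \<Rightarrow> nat \<Rightarrow> (nat \<Rightarrow> pauli) \<Rightarrow> (nat \<Rightarrow> pauli) \<Rightarrow> bool" where
  "fcomm n \<Delta> F G = odd (card {(l, q). l \<le> \<Delta> \<and> q < n \<and> anti1 (F l q) (G l q)})"

text \<open>Cumulant: U l is the conjugation action of U_l (l = 1..Delta).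
cumulant U F l is the component on level l+0.5.\<close>
fun cumulant :: "(nat \<Rightarrow> pauli \<Rightarrow> pauli) \<Rightarrow> (nat \<Rightarrow> pauli) \<Rightarrow> nat \<Rightarrow> pauli" where
  "cumulant U F 0 = F 0"
| "cumulant U F (Suc l) = pmult (F (Suc l)) (U (Suc l) (cumulant U F l))"

text \<open>Back-cumulant; back_aux ... k is the component on level (Delta-k)+0.5.\<close>
fun back_aux :: "nat \<Rightarrow> (nat \<Rightarrow> pauli \<Rightarrow> pauli) \<Rightarrow> nat \<Rightarrow> (nat \<Rightarrow> pauli) \<Rightarrow> nat \<Rightarrow> pauli" where
  "back_aux n U \<Delta> F 0 = F \<Delta>"
| "back_aux n U \<Delta> F (Suc k) =
     pmult (F (\<Delta> - Suc k)) (inv_action n (U (\<Delta> - k)) (back_aux n U \<Delta> F k))"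

definition back_cumulant :: "nat \<Rightarrow> (nat \<Rightarrow> pauli \<Rightarrow> pauli) \<Rightarrow> nat \<Rightarrow> (nat \<Rightarrow> pauli) \<Rightarrow> nat \<Rightarrow> pauli" where
  "back_cumulant n U \<Delta> F l = back_aux n U \<Delta> F (\<Delta> - l)"

end

theory Submission
  imports Defs
begin

text \<open>Write \<open>V\<close> for the top layer \<open>U\<^sub>\<Delta>\<^sub>+\<^sub>1\<close> and \<open>C\<^sub>\<Delta>\<close> for the
level-\<open>\<Delta>\<close> component of the cumulant of \<open>F\<close>. Replacing \<open>G\<^sub>\<Delta>\<close> by \<open>G\<^sub>\<Delta> \<cdot> V\<^sup>-\<^sup>1 G\<^sub>\<Delta>\<^sub>+\<^sub>1 V\<close>
(\<open>pull_back_top\<close>) turns the back-cumulant of depth \<open>\<Delta>+1\<close>, restricted to the levels up to \<open>\<Delta>\<close>,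
into a back-cumulant of depth \<open>\<Delta>\<close>. On the cumulant side, bilinearity of the commutator splits
off the top-level term \<open>[V C\<^sub>\<Delta> V\<^sup>-\<^sup>1, G\<^sub>\<Delta>\<^sub>+\<^sub>1]\<close>, which equals \<open>[C\<^sub>\<Delta>, V\<^sup>-\<^sup>1 G\<^sub>\<Delta>\<^sub>+\<^sub>1 V]\<close> because
Clifford conjugation preserves commutators: exactly the change that the replacement causes in
the level-\<open>\<Delta>\<close> term.\<close>

lemma odd_card_xor:
  assumes "finite A"
  shows "odd (card {x\<in>A. P x \<noteq> Q x}) = (odd (card {x\<in>A. P x}) \<noteq> odd (card {x\<in>A. Q x}))"
  using assms
proof (induction A rule: finite_induct)
  case empty
  then show ?case by simp
next
  case (insert a A)
  have card_insert_filter: "card {x\<in>insert a A. R x} = card {x\<in>A. R x} + (if R a then 1 else 0)"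
    for R :: "'a \<Rightarrow> bool"
  proof -
    have "{x\<in>insert a A. R x} = (if R a then insert a {x\<in>A. R x} else {x\<in>A. R x})"
      by auto
    then show ?thesis
      using insert.hyps by simp
  qed
  show ?case
    unfolding card_insert_filter using insert.IH by auto
qed

lemma anti1_commute: "anti1 a b = anti1 b a"
  by (auto simp: anti1_def)

lemma pcomm_commute: "pcomm n P Q = pcomm n Q P"
  by (simp add: pcomm_def anti1_commute)

lemma pcomm_pmult_left: "pcomm n (pmult P Q) R = (pcomm n P R \<noteq> pcomm n Q R)"
proof -
  have "anti1 (pmult P Q q) (R q) = (anti1 (P q) (R q) \<noteq> anti1 (Q q) (R q))" for q
    by (auto simp: anti1_def pmult_def)
  then show ?thesis
    using odd_card_xor[of "{..<n}" "\<lambda>q. anti1 (P q) (R q)" "\<lambda>q. anti1 (Q q) (R q)"]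
    by (simp add: pcomm_def)
qed

lemma pcomm_pmult_right: "pcomm n R (pmult P Q) = (pcomm n R P \<noteq> pcomm n R Q)"
  by (simp add: pcomm_commute[of n R] pcomm_pmult_left)

lemma pmult_in_paulis: "P \<in> paulis n \<Longrightarrow> Q \<in> paulis n \<Longrightarrow> pmult P Q \<in> paulis n"
  by (auto simp: paulis_def pmult_def)

lemma clifford_action_in_paulis:
  "clifford_action n f \<Longrightarrow> P \<in> paulis n \<Longrightarrow> f P \<in> paulis n"
  by (auto simp: clifford_action_def bij_betw_def)

lemma inv_action_in_paulis:
  "clifford_action n f \<Longrightarrow> P \<in> paulis n \<Longrightarrow> inv_action n f P \<in> paulis n"
  by (metis clifford_action_def bij_betw_def inv_action_def inv_into_into)

lemma clifford_action_inv_action: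
  "clifford_action n f \<Longrightarrow> P \<in> paulis n \<Longrightarrow> f (inv_action n f P) = P"
  by (metis clifford_action_def bij_betw_def inv_action_def f_inv_into_f)

lemma pcomm_clifford_action_adjoint:
  assumes "clifford_action n f" "P \<in> paulis n" "Q \<in> paulis n"
  shows "pcomm n (f P) Q = pcomm n P (inv_action n f Q)"
proof -
  have "inv_action n f Q \<in> paulis n"
    using assms(1,3) by (rule inv_action_in_paulis)
  then have "pcomm n (f P) (f (inv_action n f Q)) = pcomm n P (inv_action n f Q)"
    using assms(1,2) by (simp add: clifford_action_def)
  then show ?thesis
    using assms by (simp add: clifford_action_inv_action)
qed

lemma fcomm_eq_odd_sum:
  "fcomm n d F G = odd (\<Sum>l\<le>d. card {q. q < n \<and> anti1 (F l q) (G l q)})"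
proof -
  have "{(l, q). l \<le> d \<and> q < n \<and> anti1 (F l q) (G l q)}
      = (SIGMA l:{..d}. {q. q < n \<and> anti1 (F l q) (G l q)})"
    by auto
  then show ?thesis
    unfolding fcomm_def by simp
qed

lemma fcomm_0: "fcomm n 0 F G = pcomm n (F 0) (G 0)"
  by (simp add: fcomm_eq_odd_sum pcomm_def)

lemma fcomm_Suc: "fcomm n (Suc d) F G = (fcomm n d F G \<noteq> pcomm n (F (Suc d)) (G (Suc d)))"
  by (simp add: fcomm_eq_odd_sum pcomm_def)

lemma fcomm_cong:
  "(\<And>l. l \<le> d \<Longrightarrow> F l = F' l) \<Longrightarrow> (\<And>l. l \<le> d \<Longrightarrow> G l = G' l)
    \<Longrightarrow> fcomm n d F G = fcomm n d F' G'"
  by (simp add: fcomm_eq_odd_sum)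

lemma fcomm_update_top:
  "fcomm n d F (G(d := pmult (G d) X)) = (fcomm n d F G \<noteq> pcomm n (F d) X)"
proof (cases d)
  case 0
  then show ?thesis by (simp add: fcomm_0 pcomm_pmult_right)
next
  case (Suc m)
  have "fcomm n m F (G(d := pmult (G d) X)) = fcomm n m F G"
    by (rule fcomm_cong) (auto simp: Suc)
  then show ?thesis
    using Suc by (auto simp: fcomm_Suc pcomm_pmult_right)
qed

lemma cumulant_in_paulis:
  assumes "\<forall>l\<in>{1..d}. clifford_action n (U l)" "fault_op n d F" "l \<le> d"
  shows "cumulant U F l \<in> paulis n"
  using assms(3)
proof (induction l)
  case 0
  then show ?case
    using assms(2) by (simp add: fault_op_def)
next
  case (Suc l)
  then have "U (Suc l) (cumulant U F l) \<in> paulis n"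
    using assms(1) by (simp add: clifford_action_in_paulis)
  then show ?case
    using Suc.prems assms(2) by (simp add: fault_op_def pmult_in_paulis)
qed

definition pull_back_top ::
    "nat \<Rightarrow> (nat \<Rightarrow> pauli \<Rightarrow> pauli) \<Rightarrow> nat \<Rightarrow> (nat \<Rightarrow> pauli) \<Rightarrow> nat \<Rightarrow> pauli"
  where "pull_back_top n U d G = G(d := pmult (G d) (inv_action n (U (Suc d)) (G (Suc d))))"

lemma fault_op_pull_back_top:
  assumes "clifford_action n (U (Suc d))" "fault_op n (Suc d) G"
  shows "fault_op n d (pull_back_top n U d G)"
  using assms
  by (simp add: fault_op_def pull_back_top_def pmult_in_paulis inv_action_in_paulis)

lemma back_aux_Suc_eq_pull_back_top:
  "k \<le> d \<Longrightarrow> back_aux n U (Suc d) G (Suc k) = back_aux n U d (pull_back_top n U d G) k"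
proof (induction k)
  case 0
  then show ?case by (simp add: pull_back_top_def)
next
  case (Suc k)
  then have "d - Suc k \<noteq> d"
    by simp
  with Suc show ?case
    by (simp add: pull_back_top_def Suc_diff_Suc)
qed

lemma back_cumulant_Suc_eq_pull_back_top:
  "l \<le> d \<Longrightarrow> back_cumulant n U (Suc d) G l = back_cumulant n U d (pull_back_top n U d G) l"
  using back_aux_Suc_eq_pull_back_top[of "d - l" d]
  by (simp add: back_cumulant_def Suc_diff_le)

lemma fcomm_cumulant_Suc:
  assumes "clifford_action n (U (Suc d))" "cumulant U F d \<in> paulis n" "G (Suc d) \<in> paulis n"
  shows "fcomm n (Suc d) (cumulant U F) G
    = (fcomm n d (cumulant U F) (pull_back_top n U d G) \<noteq> pcomm n (F (Suc d)) (G (Suc d)))"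
proof -
  have "pcomm n (U (Suc d) (cumulant U F d)) (G (Suc d))
      = pcomm n (cumulant U F d) (inv_action n (U (Suc d)) (G (Suc d)))"
    using assms by (rule pcomm_clifford_action_adjoint)
  then show ?thesis
    by (auto simp: fcomm_Suc pcomm_pmult_left pull_back_top_def fcomm_update_top)
qed

lemma fcomm_back_cumulant_Suc:
  "fcomm n (Suc d) F (back_cumulant n U (Suc d) G)
    = (fcomm n d F (back_cumulant n U d (pull_back_top n U d G))
        \<noteq> pcomm n (F (Suc d)) (G (Suc d)))"
proof -
  have "fcomm n d F (back_cumulant n U (Suc d) G)
      = fcomm n d F (back_cumulant n U d (pull_back_top n U d G))"
    by (rule fcomm_cong) (simp_all add: back_cumulant_Suc_eq_pull_back_top)
  then show ?thesis
    by (simp add: fcomm_Suc back_cumulant_def)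
qed

theorem mainTheorem8:
  fixes n \<Delta> :: nat and U :: "nat \<Rightarrow> pauli \<Rightarrow> pauli" and F G :: "nat \<Rightarrow> pauli"
  assumes "\<forall>l\<in>{1..\<Delta>}. clifford_action n (U l)"
    and "fault_op n \<Delta> F" and "fault_op n \<Delta> G"
  shows "fcomm n \<Delta> (cumulant U F) G = fcomm n \<Delta> F (back_cumulant n U \<Delta> G)"
  using assms
proof (induction \<Delta> arbitrary: G)
  case 0
  then show ?case by (simp add: fcomm_0 back_cumulant_def)
next
  case (Suc d)
  have U_top: "clifford_action n (U (Suc d))"
    using Suc.prems(1) by simp
  have "cumulant U F d \<in> paulis n"
    using cumulant_in_paulis[OF Suc.prems(1,2)] by simp
  moreover have "G (Suc d) \<in> paulis n"
    using Suc.prems(3) by (simp add: fault_op_def)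
  moreover have "fcomm n d (cumulant U F) (pull_back_top n U d G)
      = fcomm n d F (back_cumulant n U d (pull_back_top n U d G))"
    using Suc.prems U_top fault_op_pull_back_top[of n U d G]
    by (intro Suc.IH) (auto simp: fault_op_def)
  ultimately show ?case
    using U_top by (simp add: fcomm_cumulant_Suc fcomm_back_cumulant_Suc)
qed

end
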